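(* Let $\mathbb V$ be a variation of Hodge structure of weight $-1$ over a complex manifold $X$, endowed with a weak polarization $S$, and let $\nu:X\to J(\mathbb V)$ be a normal function. Then $\nu^*\omega_S$ is a non-negative $(1,1)$-form on $X$.
   Context: $\mathbb V$ has a torsion-free underlying local system $\mathbb V_{\mathbb Z}$ and holomorphic Hodge filtration $\mathcal F^\bullet$ on $\mathcal V=\mathbb V\otimes\mathcal O_X$; weight $-1$ means each fiber is a Hodge structure $V_{\mathbb C}=\bigoplus_{p+q=-1}V^{p,q}$. A weak polarization is a flat skew-symmetric bilinear form $S$ on $\mathbb V_{\mathbb R}$ with $S(V^{p,q},\overline{V^{r,s}})=0$ unless $(p,q)=(r,s)$, and $i^{p-q}S(v,\bar v)\ge0$ for all $v\in V^{p,q}$. $J(\mathbb V)\to X$ is the family of intermediate jacobians with fibers $J(V_x)=V_{x,\mathbb C}/(V_{x,\mathbb Z}+F^0V_{x,\mathbb C})$; as a family of real tori it is identified with $\mathbb V_{\mathbb R}/\mathbb V_{\mathbb Z}$, which gives it a flat structure. $\omega_S$ is the closed 2-form on $J(\mathbb V)$ that is parallel for the flat structure, vanishes on the zero section, and restricts on each fiber $V_{x,\mathbb R}/V_{x,\mathbb Z}$ to the translation-invariant 2-form $(u,v)\mapsto S(u,v)$. A normal function is a holomorphic section $\nu$ of $J(\mathbb V)$ whose associated extension $0\to\mathbb V\to\mathbb E\to\mathbb Z_X(0)\to0$ of local systems with fiberwise mixed Hodge structures is an admissible variation of mixed Hodge structure; in particular it satisfies Griffiths' infinitesimal period relation: for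 any local holomorphic lift $\tilde\nu$ of $\nu$ to a section of $\mathcal V$, $\nabla\tilde\nu$ is a section of $\mathcal F^{-1}\otimes\Omega^1_X$, where $\nabla$ is the flat connection. *)

theory Defs
  imports "HOL-Analysis.Analysis"
begin

text \<open>The base X is replaced by an open set U in complex^'n (a chart of
the complex manifold) over which the local system is trivialised: V_Z = Z^r,
V_R = R^r, V_C = C^r, with r = CARD('r).  The flat connection is then ordinary
differentiation.  Complex structure on tangent vectors: multiplication by i.\<close>

definition vconj :: "complex^'r \<Rightarrow> complex^'r" where
  "vconj v = (\<chi> i. cnj (v $ i))"

definition real_vecs :: "(complex^'r) set" where
  "real_vecs = {v. \<forall>i. Im (v $ i) = 0}"

definition lattice_vecs :: "(complex^'r) set" where
  "lattice_vecs = {v. \<forall>i. v $ i \<in> \<int>}"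

definition csubspace :: "(complex^'r) set \<Rightarrow> bool" where
  "csubspace A \<longleftrightarrow> 0 \<in> A \<and> (\<forall>u\<in>A. \<forall>w\<in>A. u + w \<in> A) \<and> (\<forall>c. \<forall>u\<in>A. c *s u \<in> A)"

text \<open>H p = V^{p,-1-p}: a Hodge structure of weight -1 on C^r (real structure: R^r).\<close>
definition hodge_structure_wm1 :: "(int \<Rightarrow> (complex^'r) set) \<Rightarrow> bool" where
  "hodge_structure_wm1 H \<longleftrightarrow>
     (\<forall>p. csubspace (H p)) \<and>
     (\<forall>p. vconj ` H p = H (-1 - p)) \<and>
     (\<exists>N::nat. (\<forall>p. int N < \<bar>p\<bar> \<longrightarrow> H p = {0}) \<and>
        (\<forall>v. \<exists>!c. (\<forall>p. c p \<in> H p) \<and> (\<forall>p. int N < \<bar>p\<bar> \<longrightarrow> c p = 0) \<and>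
                  v = (\<Sum>p\<in>{- int N..int N}. c p)))"

definition hodge_filt :: "(int \<Rightarrow> (complex^'r) set) \<Rightarrow> int \<Rightarrow> (complex^'r) set" where
  "hodge_filt H p = {v. \<exists>c. (\<forall>p'. c p' \<in> H p') \<and> finite {p'. c p' \<noteq> 0} \<and>
                          (\<forall>p'. p' < p \<longrightarrow> c p' = 0) \<and> v = (\<Sum>p'\<in>{p'. c p' \<noteq> 0}. c p')}"

definition Sc :: "real^'r^'r \<Rightarrow> complex^'r \<Rightarrow> complex^'r \<Rightarrow> complex" where
  "Sc Sm u w = (\<Sum>i\<in>UNIV. \<Sum>j\<in>UNIV. u $ i * complex_of_real (Sm $ i $ j) * w $ j)"

text \<open>Weak polarization (flat = constant in the trivialisation); q = -1-p, so p-q = 2p+1.\<close>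
definition weak_polarization :: "real^'r^'r \<Rightarrow> (int \<Rightarrow> (complex^'r) set) \<Rightarrow> bool" where
  "weak_polarization Sm H \<longleftrightarrow>
     (\<forall>i j. Sm $ i $ j = - Sm $ j $ i) \<and>
     (\<forall>p p'. p \<noteq> p' \<longrightarrow> (\<forall>a\<in>H p. \<forall>b\<in>H p'. Sc Sm a (vconj b) = 0)) \<and>
     (\<forall>p. \<forall>v\<in>H p. Im (\<i> powi (2*p+1) * Sc Sm v (vconj v)) = 0 \<and>
                    0 \<le> Re (\<i> powi (2*p+1) * Sc Sm v (vconj v)))"

definition holo_on :: "(complex^'n) set \<Rightarrow> (complex^'n \<Rightarrow> complex^'r) \<Rightarrow> bool" where
  "holo_on W f \<longleftrightarrow> (\<forall>x\<in>W. \<exists>D. (f has_derivative D) (at x) \<and> (\<forall>c v. D (c *s v) = c *s D v))"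

definition holo_subbundle :: "(complex^'n) set \<Rightarrow> (complex^'n \<Rightarrow> (complex^'r) set) \<Rightarrow> bool" where
  "holo_subbundle U F \<longleftrightarrow> (\<forall>x0\<in>U. \<exists>W k (e::nat \<Rightarrow> complex^'n \<Rightarrow> complex^'r). open W \<and> x0 \<in> W \<and> W \<subseteq> U \<and>
      (\<forall>i<k. holo_on W (e i)) \<and>
      (\<forall>y\<in>W. F y = {v. \<exists>c::nat \<Rightarrow> complex. v = (\<Sum>i<k. c i *s e i y)} \<and>
               (\<forall>c::nat \<Rightarrow> complex. (\<Sum>i<k. c i *s e i y) = 0 \<longrightarrow> (\<forall>i<k. c i = 0))))"

definition vhs_wm1 :: "(complex^'n) set \<Rightarrow> (int \<Rightarrow> complex^'n \<Rightarrow> (complex^'r) set) \<Rightarrow> bool" where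
  "vhs_wm1 U H \<longleftrightarrow> open U \<and>
     (\<forall>x\<in>U. hodge_structure_wm1 (\<lambda>p. H p x)) \<and>
     (\<forall>p. holo_subbundle U (\<lambda>x. hodge_filt (\<lambda>q. H q x) p)) \<and>
     (\<forall>p W s x D v. open W \<and> W \<subseteq> U \<and> holo_on W s \<and>
        (\<forall>y\<in>W. s y \<in> hodge_filt (\<lambda>q. H q y) p) \<and> x \<in> W \<and> (s has_derivative D) (at x)
        \<longrightarrow> D v \<in> hodge_filt (\<lambda>q. H q x) (p - 1))"

text \<open>Holomorphic lift nu of a normal function, satisfying Griffiths' infinitesimal
period relation  (nabla nu in F^{-1} (x) Omega^1).\<close>
definition normal_function_lift ::
  "(complex^'n) set \<Rightarrow> (int \<Rightarrow> complex^'n \<Rightarrow> (complex^'r) set) \<Rightarrow> (complex^'n \<Rightarrow> complex^'r) \<Rightarrow> bool" where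
  "normal_function_lift U H nu \<longleftrightarrow> holo_on U nu \<and>
     (\<forall>x\<in>U. \<forall>D. (nu has_derivative D) (at x) \<longrightarrow> (\<forall>v. D v \<in> hodge_filt (\<lambda>q. H q x) (-1)))"

text \<open>Flat real coordinate: identification J(V_x) = V_C/(V_Z+F^0) = V_R/V_Z; the point
z + F^0 corresponds to the unique real vector r with z - r in F^0.\<close>
definition flat_coord :: "(int \<Rightarrow> complex^'n \<Rightarrow> (complex^'r) set) \<Rightarrow> complex^'n \<Rightarrow> complex^'r \<Rightarrow> complex^'r" where
  "flat_coord H x z = (THE r. r \<in> real_vecs \<and> z - r \<in> hodge_filt (\<lambda>q. H q x) 0)"

text \<open>Pullback of omega_S at a point, given the differential D of the flat coordinate of nu.\<close>
definition pullback_omega :: "real^'r^'r \<Rightarrow> (complex^'n \<Rightarrow> complex^'r) \<Rightarrow> complex^'n \<Rightarrow> complex^'n \<Rightarrow> real" where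
  "pullback_omega Sm D u w = Re (Sc Sm (D u) (D w))"

end

theory Submission
  imports Defs
begin

text \<open>Near a point, \<open>F\<^sup>0\<close> has a holomorphic frame \<open>e\<^sub>1, \<dots>, e\<^sub>k\<close>, and since the weight is -1 the
  vectors \<open>e\<^sub>i\<close> and their conjugates form a basis of \<open>V\<close>.  Expanding \<open>\<nu>\<close> in this basis with
  coefficients that depend differentiably on the point, the flat coordinate of \<open>\<nu>\<close> is
  \<open>\<nu> - \<Sum> c\<^sub>i e\<^sub>i\<close> for suitable \<open>c\<^sub>i\<close>.  Its derivative \<open>D\<close> takes values in \<open>F\<^sup>-\<^sup>1\<close> by Griffiths
  transversality and the infinitesimal period relation, and in \<open>D u + i D (i u)\<close> all terms
  except a combination of the \<open>e\<^sub>i\<close> cancel because \<open>\<nu>\<close> and \<open>e\<^sub>i\<close> are holomorphic.  Hence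
  \<open>D u - i D (i u)\<close> is of type \<open>(-1,0)\<close>, i.e. \<open>D\<close> is the real part of a complex linear map into
  \<open>V\<^sup>-\<^sup>1\<^sup>,\<^sup>0\<close>, and the pullback of \<open>\<omega>\<^sub>S\<close> is the Hodge--Riemann form of that map.\<close>

lemma vconj_nth [simp]: "vconj v $ i = cnj (v $ i)"
  by (simp add: vconj_def)

lemma vconj_vconj [simp]: "vconj (vconj v) = v"
  by (simp add: vec_eq_iff)

lemma vconj_zero [simp]: "vconj 0 = 0"
  by (simp add: vec_eq_iff)

lemma vconj_eq_0_iff [simp]: "vconj v = 0 \<longleftrightarrow> v = 0"
  by (metis vconj_vconj vconj_zero)

lemma vconj_add: "vconj (a + b) = vconj a + vconj b"
  by (simp add: vec_eq_iff)

lemma vconj_diff: "vconj (a - b) = vconj a - vconj b"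
  by (simp add: vec_eq_iff)

lemma vconj_minus: "vconj (- a) = - vconj a"
  by (simp add: vec_eq_iff)

lemma vconj_smult: "vconj (c *s v) = cnj c *s vconj v"
  by (simp add: vec_eq_iff)

lemma vconj_sum: "vconj (sum f A) = (\<Sum>i\<in>A. vconj (f i))"
  by (induct A rule: infinite_finite_induct) (simp_all add: vconj_add)

lemma norm_vconj: "norm (vconj v) = norm v"
  by (simp add: norm_vec_def)

lemma bounded_linear_vconj: "bounded_linear vconj"
  by (rule bounded_linear_intro[where K=1]) (simp_all add: vec_eq_iff norm_vconj)

lemma real_vecs_iff_vconj: "v \<in> real_vecs \<longleftrightarrow> vconj v = v"
  by (auto simp: real_vecs_def vec_eq_iff complex_eq_iff)

lemma norm_vector_smult: "norm (c *s (v::complex^'r)) = norm c * norm v"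
  by (simp add: norm_vec_def norm_mult L2_set_right_distrib)

lemma scaleR_eq_vector_smult: "t *\<^sub>R (v::complex^'r) = complex_of_real t *s v"
  by (simp add: vec_eq_iff) (simp add: scaleR_conv_of_real)

lemma bounded_linear_vector_smult: "bounded_linear (\<lambda>v::complex^'r. c *s v)"
  by (rule bounded_linear_intro[where K="norm c"])
    (simp_all add: vec_eq_iff norm_vector_smult mult.commute)

lemma bounded_bilinear_vector_smult: "bounded_bilinear (\<lambda>(c::complex) (v::complex^'r). c *s v)"
proof (rule bounded_bilinear.intro)
  show "\<exists>K. \<forall>a b. norm (a *s (b::complex^'r)) \<le> norm a * norm b * K"
    by (rule exI[where x=1]) (simp add: norm_vector_smult)
qed (simp_all add: vec_eq_iff algebra_simps)

lemma has_derivative_real_vecs: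
  fixes f :: "'a::real_normed_vector \<Rightarrow> complex^'r"
  assumes "open W" "x \<in> W" "\<And>y. y \<in> W \<Longrightarrow> f y \<in> real_vecs" "(f has_derivative D) (at x)"
  shows "D u \<in> real_vecs"
proof -
  have "Im (D u $ i) = 0" for i
  proof -
    have "bounded_linear (\<lambda>v::complex^'r. Im (v $ i))"
      by (rule bounded_linear_compose[OF bounded_linear_Im bounded_linear_vec_nth])
    then have "((\<lambda>y. Im (f y $ i)) has_derivative (\<lambda>h. Im (D h $ i))) (at x)"
      using assms(4) by (rule bounded_linear.has_derivative)
    moreover have "((\<lambda>y. Im (f y $ i)) has_derivative (\<lambda>h. 0)) (at x)"
      by (rule has_derivative_transform_within_open[OF has_derivative_const assms(1,2)])
        (use assms(3) in \<open>simp add: real_vecs_def\<close>)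
    ultimately show ?thesis
      by (metis has_derivative_unique)
  qed
  then show ?thesis
    by (simp add: real_vecs_def)
qed

lemma csubspace_0: "csubspace A \<Longrightarrow> 0 \<in> A"
  unfolding csubspace_def by simp

lemma csubspace_add: "csubspace A \<Longrightarrow> u \<in> A \<Longrightarrow> w \<in> A \<Longrightarrow> u + w \<in> A"
  unfolding csubspace_def by simp

lemma csubspace_smult: "csubspace A \<Longrightarrow> u \<in> A \<Longrightarrow> c *s u \<in> A"
  unfolding csubspace_def by simp

lemma csubspace_neg: "csubspace A \<Longrightarrow> u \<in> A \<Longrightarrow> - u \<in> A"
  using csubspace_smult[of A u "-1"] by (simp add: vector_sneg_minus1[symmetric])

lemma csubspace_diff: "csubspace A \<Longrightarrow> u \<in> A \<Longrightarrow> w \<in> A \<Longrightarrow> u - w \<in> A"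
  using csubspace_add[of A u "- w"] csubspace_neg[of A w] by simp

lemma csubspace_sum: "csubspace A \<Longrightarrow> (\<And>i. i \<in> S \<Longrightarrow> f i \<in> A) \<Longrightarrow> sum f S \<in> A"
  by (induct S rule: infinite_finite_induct) (simp_all add: csubspace_0 csubspace_add)

definition hodge_structure_wm1_within :: "(int \<Rightarrow> (complex^'r) set) \<Rightarrow> nat \<Rightarrow> bool" where
  "hodge_structure_wm1_within H N \<longleftrightarrow> (\<forall>p. csubspace (H p)) \<and> (\<forall>p. vconj ` H p = H (-1 - p)) \<and>
     (\<forall>p. int N < \<bar>p\<bar> \<longrightarrow> H p = {0}) \<and>
     (\<forall>v. \<exists>!c. (\<forall>p. c p \<in> H p) \<and> (\<forall>p. int N < \<bar>p\<bar> \<longrightarrow> c p = 0) \<and>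
                  v = (\<Sum>p\<in>{- int N..int N}. c p))"

lemma hodge_structure_wm1_iff: "hodge_structure_wm1 H \<longleftrightarrow> (\<exists>N. hodge_structure_wm1_within H N)"
  unfolding hodge_structure_wm1_def hodge_structure_wm1_within_def by blast

definition hodge_component :: "(int \<Rightarrow> (complex^'r) set) \<Rightarrow> nat \<Rightarrow> complex^'r \<Rightarrow> int \<Rightarrow> complex^'r" where
  "hodge_component H N v = (THE c. (\<forall>p. c p \<in> H p) \<and> (\<forall>p. int N < \<bar>p\<bar> \<longrightarrow> c p = 0) \<and>
                  v = (\<Sum>p\<in>{- int N..int N}. c p))"

context
  fixes H :: "int \<Rightarrow> (complex^'r) set" and N :: nat
  assumes hs: "hodge_structure_wm1_within H N"
begin

lemma csubspace_hodge_piece: "csubspace (H p)"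
  using hs unfolding hodge_structure_wm1_within_def by blast

lemma vconj_image_hodge_piece: "vconj ` H p = H (-1 - p)"
  using hs unfolding hodge_structure_wm1_within_def by blast

lemma hodge_piece_vanishes: "c \<in> H p \<Longrightarrow> int N < \<bar>p\<bar> \<Longrightarrow> c = 0"
  using hs unfolding hodge_structure_wm1_within_def by blast

lemma hodge_decomposition:
  shows hodge_component_in: "hodge_component H N v p \<in> H p"
    and hodge_component_vanishes: "int N < \<bar>p\<bar> \<Longrightarrow> hodge_component H N v p = 0"
    and sum_hodge_component: "(\<Sum>p\<in>{- int N..int N}. hodge_component H N v p) = v"
proof -
  have "\<exists>!c. (\<forall>p. c p \<in> H p) \<and> (\<forall>p. int N < \<bar>p\<bar> \<longrightarrow> c p = 0) \<and>
                  v = (\<Sum>p\<in>{- int N..int N}. c p)"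
    using hs unfolding hodge_structure_wm1_within_def by blast
  from theI'[OF this] show "hodge_component H N v p \<in> H p"
    "int N < \<bar>p\<bar> \<Longrightarrow> hodge_component H N v p = 0"
    "(\<Sum>p\<in>{- int N..int N}. hodge_component H N v p) = v"
    unfolding hodge_component_def by auto
qed

lemma hodge_component_unique:
  assumes "\<And>p. c p \<in> H p" "v = (\<Sum>p\<in>{- int N..int N}. c p)"
  shows "hodge_component H N v = c"
  unfolding hodge_component_def
proof (rule the1_equality)
  show "\<exists>!c. (\<forall>p. c p \<in> H p) \<and> (\<forall>p. int N < \<bar>p\<bar> \<longrightarrow> c p = 0) \<and>
                  v = (\<Sum>p\<in>{- int N..int N}. c p)"
    using hs unfolding hodge_structure_wm1_within_def by blast
qed (use assms hodge_piece_vanishes in blast)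

lemma hodge_component_add:
  "hodge_component H N (u + w) = (\<lambda>p. hodge_component H N u p + hodge_component H N w p)"
  by (rule hodge_component_unique)
    (simp_all add: csubspace_add[OF csubspace_hodge_piece] hodge_component_in
      sum.distrib sum_hodge_component)

lemma hodge_component_smult:
  "hodge_component H N (c *s u) = (\<lambda>p. c *s hodge_component H N u p)"
  by (rule hodge_component_unique)
    (simp_all add: csubspace_smult[OF csubspace_hodge_piece] hodge_component_in
      sum_cmul sum_hodge_component)

lemma hodge_component_vconj:
  "hodge_component H N (vconj v) q = vconj (hodge_component H N v (-1 - q))"
proof -
  let ?c = "\<lambda>q. vconj (hodge_component H N v (-1 - q))"
  let ?I = "{- int N - 1..int N}"
  have cH: "?c q \<in> H q" for q
    using vconj_image_hodge_piece[of "-1 - q"] hodge_component_in[of v "-1 - q"] by auto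
  have "(\<Sum>q\<in>{- int N..int N}. ?c q) = (\<Sum>q\<in>?I. ?c q)"
    using hodge_piece_vanishes[OF cH] by (intro sum.mono_neutral_left) auto
  also have "\<dots> = (\<Sum>p\<in>?I. vconj (hodge_component H N v p))"
    by (rule sum.reindex_bij_witness[where i="\<lambda>p. -1 - p" and j="\<lambda>q. -1 - q"]) auto
  also have "\<dots> = (\<Sum>p\<in>{- int N..int N}. vconj (hodge_component H N v p))"
    using hodge_component_vanishes[of _ v] by (intro sum.mono_neutral_right) auto
  also have "\<dots> = vconj v"
    by (simp add: vconj_sum[symmetric] sum_hodge_component)
  finally show ?thesis
    using hodge_component_unique[OF cH] by metis
qed

lemma hodge_filt_iff: "v \<in> hodge_filt H p \<longleftrightarrow> (\<forall>q<p. hodge_component H N v q = 0)"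
proof
  assume "v \<in> hodge_filt H p"
  then obtain c where c: "\<And>p'. c p' \<in> H p'" "\<And>p'. p' < p \<Longrightarrow> c p' = 0"
    and v: "v = (\<Sum>p'\<in>{p'. c p' \<noteq> 0}. c p')"
    unfolding hodge_filt_def by blast
  have "{p'. c p' \<noteq> 0} \<subseteq> {- int N..int N}"
    using hodge_piece_vanishes[OF c(1)] by force
  then have "v = (\<Sum>p'\<in>{- int N..int N}. c p')"
    unfolding v by (intro sum.mono_neutral_left) auto
  then have "hodge_component H N v = c"
    by (rule hodge_component_unique[OF c(1)])
  then show "\<forall>q<p. hodge_component H N v q = 0"
    using c(2) by simp
next
  assume low: "\<forall>q<p. hodge_component H N v q = 0"
  let ?c = "hodge_component H N v"
  have sub: "{p'. ?c p' \<noteq> 0} \<subseteq> {- int N..int N}"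
    using hodge_component_vanishes[of _ v] by force
  then have "(\<Sum>p'\<in>{p'. ?c p' \<noteq> 0}. ?c p') = v"
    by (subst sum.mono_neutral_left[OF _ sub]) (auto simp: sum_hodge_component)
  then show "v \<in> hodge_filt H p"
    unfolding hodge_filt_def using sub low hodge_component_in finite_subset[OF sub]
    by (intro CollectI exI[of _ ?c]) auto
qed

lemma csubspace_hodge_filt: "csubspace (hodge_filt H p)"
proof -
  have "hodge_component H N 0 = (\<lambda>p. 0)"
    by (rule hodge_component_unique) (simp_all add: csubspace_0[OF csubspace_hodge_piece])
  then show ?thesis
    unfolding csubspace_def by (simp add: hodge_filt_iff hodge_component_add hodge_component_smult)
qed

lemma hodge_filt_antimono: "p' \<le> p \<Longrightarrow> u \<in> hodge_filt H p \<Longrightarrow> u \<in> hodge_filt H p'"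
  by (simp add: hodge_filt_iff)

text \<open>Weight -1 means that \<open>V\<close> is the direct sum of \<open>F\<^sup>0\<close> and its complex conjugate.\<close>

lemma hodge_filt_0_plus_conj: "\<exists>f h. v = f + h \<and> f \<in> hodge_filt H 0 \<and> vconj h \<in> hodge_filt H 0"
proof -
  let ?cf = "\<lambda>p. if 0 \<le> p then hodge_component H N v p else 0"
  let ?ch = "\<lambda>p. if p < 0 then hodge_component H N v p else 0"
  define f where "f = (\<Sum>p\<in>{- int N..int N}. ?cf p)"
  define h where "h = (\<Sum>p\<in>{- int N..int N}. ?ch p)"
  have cf: "?cf p \<in> H p" and ch: "?ch p \<in> H p" for p
    using hodge_component_in[of v p] csubspace_0[OF csubspace_hodge_piece] by simp_all
  have "f + h = (\<Sum>p\<in>{- int N..int N}. hodge_component H N v p)"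
    unfolding f_def h_def sum.distrib[symmetric] by (rule sum.cong) auto
  then have "v = f + h"
    by (simp add: sum_hodge_component)
  moreover have "f \<in> hodge_filt H 0"
    using hodge_component_unique[OF cf f_def] by (simp add: hodge_filt_iff)
  moreover have "vconj h \<in> hodge_filt H 0"
    using hodge_component_unique[OF ch h_def] by (simp add: hodge_filt_iff hodge_component_vconj)
  ultimately show ?thesis
    by blast
qed

lemma hodge_component_conj_filt:
  assumes "vconj f \<in> hodge_filt H 0" "0 \<le> q"
  shows "hodge_component H N f q = 0"
proof -
  have "hodge_component H N (vconj f) (-1 - q) = 0"
    using assms by (simp add: hodge_filt_iff)
  then show ?thesis
    by (simp add: hodge_component_vconj)
qed

lemma hodge_filt_0_inter_conj:
  assumes "f \<in> hodge_filt H 0" "vconj f \<in> hodge_filt H 0"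
  shows "f = 0"
proof -
  have "hodge_component H N f q = 0" for q
    using assms hodge_component_conj_filt[OF assms(2)] by (cases "q < 0") (auto simp: hodge_filt_iff)
  then show ?thesis
    using sum_hodge_component[of f] by simp
qed

lemma hodge_filt_m1_inter_conj:
  assumes "a \<in> hodge_filt H (-1)" "vconj a \<in> hodge_filt H 0"
  shows "a \<in> H (-1)"
proof -
  have "hodge_component H N a q = 0" if "q \<noteq> -1" for q
    using that assms hodge_component_conj_filt[OF assms(2)]
    by (cases "q < -1") (auto simp: hodge_filt_iff)
  then have "(\<Sum>p\<in>{- int N..int N}. hodge_component H N a p) =
      (\<Sum>p\<in>{- int N..int N}. if p = -1 then hodge_component H N a (-1) else 0)"
    by (intro sum.cong) auto
  then show ?thesis
    using hodge_component_in[of a "-1"] csubspace_0[OF csubspace_hodge_piece]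
    by (auto simp: sum_hodge_component sum.delta split: if_splits)
qed

end

lemma flat_coord_eqI:
  assumes hs: "hodge_structure_wm1_within (\<lambda>q. H q y) N"
    and r: "r \<in> real_vecs" and zr: "z - r \<in> hodge_filt (\<lambda>q. H q y) 0"
  shows "flat_coord H y z = r"
  unfolding flat_coord_def
proof (rule the_equality)
  fix r' assume r': "r' \<in> real_vecs \<and> z - r' \<in> hodge_filt (\<lambda>q. H q y) 0"
  have "r - r' = (z - r') - (z - r)"
    by simp
  then have "r - r' \<in> hodge_filt (\<lambda>q. H q y) 0"
    using csubspace_diff[OF csubspace_hodge_filt[OF hs]] r' zr by metis
  moreover have "vconj (r - r') = r - r'"
    using r r' by (simp add: real_vecs_iff_vconj vconj_diff)
  ultimately show "r' = r"
    using hodge_filt_0_inter_conj[OF hs] by fastforce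
qed (use r zr in blast)

lemma Sc_add_left: "Sc S (a + b) c = Sc S a c + Sc S b c"
  by (simp add: Sc_def algebra_simps sum.distrib)

lemma Sc_add_right: "Sc S c (a + b) = Sc S c a + Sc S c b"
  by (simp add: Sc_def algebra_simps sum.distrib)

lemma Sc_diff_left: "Sc S (a - b) c = Sc S a c - Sc S b c"
  by (simp add: Sc_def algebra_simps sum_subtractf)

lemma Sc_diff_right: "Sc S c (a - b) = Sc S c a - Sc S c b"
  by (simp add: Sc_def algebra_simps sum_subtractf)

lemma Sc_smult_left: "Sc S (t *s a) c = t * Sc S a c"
  by (simp add: Sc_def algebra_simps sum_distrib_left)

lemma Sc_smult_right: "Sc S c (t *s a) = t * Sc S c a"
  by (simp add: Sc_def algebra_simps sum_distrib_left)

lemma Sc_commute_skew: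
  assumes "\<forall>i j. S $ i $ j = - S $ j $ i"
  shows "Sc S b a = - Sc S a b"
proof -
  have "Sc S b a = (\<Sum>j\<in>UNIV. \<Sum>i\<in>UNIV. b $ i * complex_of_real (S $ i $ j) * a $ j)"
    unfolding Sc_def by (rule sum.swap)
  also have "\<dots> = (\<Sum>j\<in>UNIV. \<Sum>i\<in>UNIV. - (a $ j * complex_of_real (S $ j $ i) * b $ i))"
  proof (intro sum.cong refl)
    fix i j
    have "S $ i $ j = - S $ j $ i"
      using assms by blast
    then show "b $ i * complex_of_real (S $ i $ j) * a $ j = - (a $ j * complex_of_real (S $ j $ i) * b $ i)"
      by (simp add: algebra_simps)
  qed
  also have "\<dots> = - Sc S a b"
    by (simp add: Sc_def sum_negf)
  finally show ?thesis .
qed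

lemma Sc_self_skew:
  assumes "\<forall>i j. S $ i $ j = - S $ j $ i"
  shows "Sc S a a = 0"
  using Sc_commute_skew[OF assms, of a a] by simp

lemma Sc_hodge_piece_m1:
  assumes wp: "weak_polarization Sm H" and hs: "hodge_structure_wm1 H"
    and a: "a \<in> H (-1)" and b: "b \<in> H (-1)"
  shows "Sc Sm a b = 0" "Sc Sm (vconj a) (vconj b) = 0"
    and "0 \<le> Re (- \<i> * Sc Sm a (vconj a))"
proof -
  have orth: "\<And>p p' u v. p \<noteq> p' \<Longrightarrow> u \<in> H p \<Longrightarrow> v \<in> H p' \<Longrightarrow> Sc Sm u (vconj v) = 0"
    using wp unfolding weak_polarization_def by blast
  have "vconj ` H (-1) = H 0"
    using hs unfolding hodge_structure_wm1_def by (metis diff_minus_eq_add minus_minus add.inverse_neutral add.right_inverse)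
  then have "vconj a \<in> H 0" "vconj b \<in> H 0"
    using a b by auto
  then show "Sc Sm a b = 0" "Sc Sm (vconj a) (vconj b) = 0"
    using orth[of "-1" 0 a "vconj b"] orth[of 0 "-1" "vconj a" b] a b by simp_all
  have "0 \<le> Re (\<i> powi (2 * (-1) + 1) * Sc Sm a (vconj a))"
    using wp a unfolding weak_polarization_def by blast
  then show "0 \<le> Re (- \<i> * Sc Sm a (vconj a))"
    by (simp add: power_int_minus)
qed

text \<open>\<open>D u\<close> is the real part of the \<open>(-1,0)\<close>-vector \<open>a = D u - i D (i u)\<close>, and \<open>D (i u)\<close> that
  of \<open>i a\<close>.  Orthogonality of the Hodge pieces kills the \<open>(2,0)\<close> and \<open>(0,2)\<close> parts of
  \<open>\<omega>\<^sub>S\<close>, and the remaining \<open>(1,1)\<close> part is the Hodge--Riemann form.\<close>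

lemma pullback_omega_hodge_type:
  assumes wp: "weak_polarization Sm H" and hs: "hodge_structure_wm1 H"
    and real: "\<And>u. D u \<in> real_vecs" and type: "\<And>u. D u - \<i> *s D (\<i> *s u) \<in> H (-1)"
  shows "pullback_omega Sm D (\<i> *s u) (\<i> *s w) = pullback_omega Sm D u w"
    and "0 \<le> pullback_omega Sm D u (\<i> *s u)"
proof -
  have sk: "\<forall>i j. Sm $ i $ j = - Sm $ j $ i"
    using wp unfolding weak_polarization_def by blast
  define a where "a u = D u - \<i> *s D (\<i> *s u)" for u
  have half: "D u = (1/2) *s (a u + vconj (a u))" "D (\<i> *s u) = (\<i>/2) *s (a u - vconj (a u))" for u
    using real[of u] real[of "\<i> *s u"]
    by (auto simp: a_def vec_eq_iff real_vecs_def complex_eq_iff)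
  note Sab = Sc_hodge_piece_m1[OF wp hs type type, folded a_def]
  have "Sc Sm (a u - vconj (a u)) (a w - vconj (a w)) = - Sc Sm (a u + vconj (a u)) (a w + vconj (a w))"
    by (simp add: Sc_add_left Sc_add_right Sc_diff_left Sc_diff_right Sab)
  then show "pullback_omega Sm D (\<i> *s u) (\<i> *s w) = pullback_omega Sm D u w"
    unfolding pullback_omega_def half(2)[of u] half(2)[of w] half(1)[of u] half(1)[of w]
      Sc_smult_left Sc_smult_right
    by simp
  have "Sc Sm (a u + vconj (a u)) (a u - vconj (a u)) = - 2 * Sc Sm (a u) (vconj (a u))"
    by (simp add: Sc_add_left Sc_diff_right Sc_self_skew[OF sk] Sc_commute_skew[OF sk, of "vconj (a u)"])
  then have "pullback_omega Sm D u (\<i> *s u) = Re (- \<i> * Sc Sm (a u) (vconj (a u))) / 2"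
    unfolding pullback_omega_def half(2)[of u] half(1)[of u] Sc_smult_left Sc_smult_right
    by simp
  then show "0 \<le> pullback_omega Sm D u (\<i> *s u)"
    using Sab(3)[of u] by simp
qed

lemma linear_euclidean_expansion:
  fixes f :: "'b::euclidean_space \<Rightarrow> 'c::real_vector"
  assumes "linear f"
  shows "f c = (\<Sum>j\<in>Basis. (c \<bullet> j) *\<^sub>R f j)"
proof -
  have "f c = f (\<Sum>j\<in>Basis. (c \<bullet> j) *\<^sub>R j)"
    by (simp add: euclidean_representation)
  also have "\<dots> = (\<Sum>j\<in>Basis. (c \<bullet> j) *\<^sub>R f j)"
    by (simp add: linear_sum[OF assms] linear_scale[OF assms])
  finally show ?thesis .
qed

text \<open>The map \<open>(y, v) \<mapsto> (y, L y v)\<close> is inverted by \<open>(y, z) \<mapsto> (y, L y\<inverse> z)\<close>, so the inverse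
  function theorem applies to it.\<close>

lemma has_derivative_inverse_family:
  fixes L :: "'a::euclidean_space \<Rightarrow> 'b::euclidean_space \<Rightarrow> 'b" and w :: "'a \<Rightarrow> 'b"
  assumes W: "open W" "x \<in> W"
    and lin: "\<And>y. y \<in> W \<Longrightarrow> linear (L y)"
    and inj: "\<And>y. y \<in> W \<Longrightarrow> inj (L y)"
    and cont: "\<And>j. j \<in> Basis \<Longrightarrow> continuous_on W (\<lambda>y. L y j)"
    and dL: "\<And>j. j \<in> Basis \<Longrightarrow> ((\<lambda>y. L y j) has_derivative DL j) (at x)"
    and dw: "(w has_derivative Dw) (at x)"
  shows "\<exists>G. ((\<lambda>y. inv (L y) (w y)) has_derivative G) (at x)"
proof -
  have LLi: "L y (inv (L y) z) = z" if "y \<in> W" for y z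
    using lin[OF that] inj[OF that] by (simp add: linear_injective_imp_surjective surj_f_inv_f)
  have LiL: "inv (L y) (L y v) = v" if "y \<in> W" for y v
    using inj[OF that] by (simp add: inv_f_f)
  define v0 where "v0 = inv (L x) (w x)"
  define Phi where "Phi q = (fst q, \<Sum>j\<in>Basis. (snd q \<bullet> j) *\<^sub>R L (fst q) j)" for q :: "'a \<times> 'b"
  define Phi' where "Phi' h = (fst h, (\<Sum>j\<in>Basis. (v0 \<bullet> j) *\<^sub>R DL j (fst h)) + L x (snd h))"
    for h :: "'a \<times> 'b"
  define Gt where "Gt q = (fst q, inv (L (fst q)) (snd q))" for q :: "'a \<times> 'b"
  define G' where "G' h = (fst h, inv (L x) (snd h - (\<Sum>j\<in>Basis. (v0 \<bullet> j) *\<^sub>R DL j (fst h))))"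
    for h :: "'a \<times> 'b"
  have Phi_eq: "Phi q = (fst q, L (fst q) (snd q))" if "fst q \<in> W" for q
    by (simp only: Phi_def linear_euclidean_expansion[OF lin[OF that], of "snd q"])
  have "continuous_on (W \<times> UNIV) (\<lambda>q. L (fst q) j)" if "j \<in> Basis" for j
    by (rule continuous_on_compose2[OF cont[OF that] continuous_on_fst]) auto
  then have contPhi: "continuous_on (W \<times> UNIV) Phi"
    unfolding Phi_def by (intro continuous_intros) auto
  have GtPhi: "Gt (Phi q) = q" if "q \<in> W \<times> UNIV" for q
    using that by (auto simp: Phi_eq Gt_def LiL)
  have "((\<lambda>q. L (fst q) j) has_derivative (\<lambda>h. DL j (fst h))) (at (x, v0))" if "j \<in> Basis" for j
  proof -
    have "((\<lambda>y. L y j) has_derivative DL j) (at (fst (x, v0)))"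
      using dL[OF that] by simp
    from has_derivative_compose[OF bounded_linear_imp_has_derivative[OF bounded_linear_fst] this]
    show ?thesis
      by simp
  qed
  then have "(Phi has_derivative (\<lambda>h. (fst h, \<Sum>j\<in>Basis. (v0 \<bullet> j) *\<^sub>R DL j (fst h) + (snd h \<bullet> j) *\<^sub>R L x j)))
      (at (x, v0))"
    unfolding Phi_def by (intro derivative_eq_intros) auto
  then have dPhi: "(Phi has_derivative Phi') (at (x, v0))"
    unfolding Phi'_def linear_euclidean_expansion[OF lin[OF W(2)], of "snd _"]
    by (simp add: sum.distrib)
  have "Phi' \<circ> G' = id"
    by (auto simp: Phi'_def G'_def LLi[OF W(2)])
  then have "(Gt has_derivative G') (at (Phi (x, v0)))"
    using has_derivative_inverse_strong[OF open_Times[OF W(1) open_UNIV] _ contPhi GtPhi dPhi] W(2)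
    by auto
  moreover have "Phi (x, v0) = (x, w x)"
    using W(2) by (simp add: Phi_eq v0_def LLi)
  ultimately have "((\<lambda>y. Gt (y, w y)) has_derivative (\<lambda>h. G' (h, Dw h))) (at x)"
    using has_derivative_compose[OF has_derivative_Pair[OF has_derivative_ident dw], of Gt G'] by simp
  then show ?thesis
    using has_derivative_snd by (fastforce simp: Gt_def)
qed

definition frame_of :: "(complex^'r) set \<Rightarrow> nat \<Rightarrow> (nat \<Rightarrow> complex^'r) \<Rightarrow> bool" where
  "frame_of F k e \<longleftrightarrow> F = {v. \<exists>c::nat \<Rightarrow> complex. v = (\<Sum>i<k. c i *s e i)} \<and>
     (\<forall>c::nat \<Rightarrow> complex. (\<Sum>i<k. c i *s e i) = 0 \<longrightarrow> (\<forall>i<k. c i = 0))"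

lemma holo_subbundle_iff_frame:
  "holo_subbundle U F \<longleftrightarrow> (\<forall>x0\<in>U. \<exists>W k e. open W \<and> x0 \<in> W \<and> W \<subseteq> U \<and>
      (\<forall>i<k. holo_on W (e i)) \<and> (\<forall>y\<in>W. frame_of (F y) k (\<lambda>i. e i y)))"
  unfolding holo_subbundle_def frame_of_def ..

definition frame_expansion ::
  "(nat \<Rightarrow> complex^'r) \<Rightarrow> nat \<Rightarrow> (nat \<Rightarrow> complex) \<Rightarrow> (nat \<Rightarrow> complex) \<Rightarrow> complex^'r" where
  "frame_expansion e k a b = (\<Sum>i<k. a i *s e i) + (\<Sum>i<k. b i *s vconj (e i))"

lemma frame_expansion_add:
  "frame_expansion e k (\<lambda>i. a i + a' i) (\<lambda>i. b i + b' i) = frame_expansion e k a b + frame_expansion e k a' b'"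
  by (simp add: frame_expansion_def vector_sadd_rdistrib sum.distrib algebra_simps)

lemma frame_expansion_diff:
  "frame_expansion e k (\<lambda>i. a i - a' i) (\<lambda>i. b i - b' i) = frame_expansion e k a b - frame_expansion e k a' b'"
  by (simp add: frame_expansion_def vector_sub_rdistrib sum_subtractf algebra_simps)

lemma frame_expansion_smult:
  "frame_expansion e k (\<lambda>i. c * a i) (\<lambda>i. c * b i) = c *s frame_expansion e k a b"
  by (simp add: frame_expansion_def vector_add_ldistrib sum_cmul[symmetric] vector_smult_assoc)

lemma frame_expansion_cong:
  "(\<And>i. i < k \<Longrightarrow> a i = a' i \<and> b i = b' i) \<Longrightarrow> frame_expansion e k a b = frame_expansion e k a' b'"
  unfolding frame_expansion_def by (intro arg_cong2[where f="(+)"] sum.cong) auto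

lemma has_derivative_frame_expansion:
  assumes "\<And>i. i < k \<Longrightarrow> (e i has_derivative De i) (at x)"
  shows "((\<lambda>y. frame_expansion (\<lambda>i. e i y) k a b) has_derivative
           (\<lambda>h. frame_expansion (\<lambda>i. De i h) k a b)) (at x)"
  unfolding frame_expansion_def
  using assms by (intro has_derivative_add has_derivative_sum
      bounded_linear.has_derivative[OF bounded_linear_vector_smult]
      bounded_linear.has_derivative[OF bounded_linear_vconj]) auto

lemma linear_frame_expansion_coordinates:
  fixes A B :: "complex^'m \<Rightarrow> nat \<Rightarrow> complex"
  assumes "\<And>i. i < k \<Longrightarrow> linear (\<lambda>u. A u i) \<and> linear (\<lambda>u. B u i)"
  shows "linear (\<lambda>u. frame_expansion e k (A u) (B u))"
proof -
  have add: "A (u + w) i = A u i + A w i \<and> B (u + w) i = B u i + B w i"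
    and scale: "A (of_real r *s u) i = of_real r * A u i \<and> B (of_real r *s u) i = of_real r * B u i"
    if "i < k" for i u w r
    using linear_add[OF conjunct1[OF assms[OF that]], of u w] linear_add[OF conjunct2[OF assms[OF that]], of u w]
      linear_scale[OF conjunct1[OF assms[OF that]], of r u] linear_scale[OF conjunct2[OF assms[OF that]], of r u]
    by (simp_all add: scaleR_eq_vector_smult scaleR_conv_of_real[where 'a=complex])
  show ?thesis
  proof (rule linearI)
    show "frame_expansion e k (A (u + w)) (B (u + w)) =
        frame_expansion e k (A u) (B u) + frame_expansion e k (A w) (B w)" for u w
      unfolding frame_expansion_add[symmetric] by (rule frame_expansion_cong) (use add in blast)
    show "frame_expansion e k (A (r *\<^sub>R u)) (B (r *\<^sub>R u)) = r *\<^sub>R frame_expansion e k (A u) (B u)" for r u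
      unfolding scaleR_eq_vector_smult frame_expansion_smult[symmetric]
      by (rule frame_expansion_cong) (use scale in blast)
  qed
qed

context
  fixes H :: "int \<Rightarrow> (complex^'r) set" and N :: nat and k :: nat and e :: "nat \<Rightarrow> complex^'r"
  assumes hs: "hodge_structure_wm1_within H N" and frame: "frame_of (hodge_filt H 0) k e"
begin

lemma frame_sum_in_hodge_filt: "(\<Sum>i<k. c i *s e i) \<in> hodge_filt H 0"
  using frame unfolding frame_of_def by blast

lemma frame_in_hodge_filt: "i < k \<Longrightarrow> e i \<in> hodge_filt H 0"
proof -
  assume "i < k"
  have "(\<Sum>j<k. (if j = i then 1 else 0) *s e j) = (\<Sum>j<k. if j = i then e j else 0)"
    by (rule sum.cong) auto
  then show ?thesis
    using frame_sum_in_hodge_filt[of "\<lambda>j. if j = i then 1 else 0"] \<open>i < k\<close> by simp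
qed

lemma frame_coeffs_eq_0: "(\<Sum>i<k. c i *s e i) = 0 \<Longrightarrow> i < k \<Longrightarrow> c i = 0"
  using frame unfolding frame_of_def by blast

lemma frame_expansion_eq_0:
  assumes "frame_expansion e k a b = 0" "i < k"
  shows "a i = 0 \<and> b i = 0"
proof -
  define f where "f = (\<Sum>i<k. a i *s e i)"
  have conj: "vconj f = - (\<Sum>i<k. cnj (b i) *s e i)"
    using assms(1) by (simp add: frame_expansion_def f_def add_eq_0_iff2 vconj_minus vconj_sum vconj_smult)
  have "f \<in> hodge_filt H 0"
    unfolding f_def by (rule frame_sum_in_hodge_filt)
  moreover have "vconj f \<in> hodge_filt H 0"
    unfolding conj by (rule csubspace_neg[OF csubspace_hodge_filt[OF hs] frame_sum_in_hodge_filt])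
  ultimately have "f = 0"
    by (rule hodge_filt_0_inter_conj[OF hs])
  then show ?thesis
    using conj frame_coeffs_eq_0[of a i] frame_coeffs_eq_0[of "\<lambda>i. cnj (b i)" i] assms(2)
    by (simp add: f_def)
qed

lemma frame_expansion_inj:
  "frame_expansion e k a b = frame_expansion e k a' b' \<Longrightarrow> i < k \<Longrightarrow> a i = a' i \<and> b i = b' i"
  using frame_expansion_eq_0[of "\<lambda>i. a i - a' i" "\<lambda>i. b i - b' i" i] by (simp add: frame_expansion_diff)

lemma frame_expansion_surj: "\<exists>a b. v = frame_expansion e k a b"
proof -
  obtain f h where v: "v = f + h" and "f \<in> hodge_filt H 0" "vconj h \<in> hodge_filt H 0"
    using hodge_filt_0_plus_conj[OF hs] by blast
  then obtain a c where f: "f = (\<Sum>i<k. a i *s e i)" and "vconj h = (\<Sum>i<k. c i *s e i)"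
    using frame unfolding frame_of_def by blast
  then have "h = vconj (\<Sum>i<k. c i *s e i)"
    by (metis vconj_vconj)
  then have "v = frame_expansion e k a (\<lambda>i. cnj (c i))"
    unfolding v f frame_expansion_def by (simp add: vconj_sum vconj_smult)
  then show ?thesis
    by blast
qed

lemma inj_frame_expansion_coordinates:
  assumes "\<And>u. frame_expansion e' k (A u) (B u) = u"
  shows "inj (\<lambda>u. frame_expansion e k (A u) (B u))"
proof (rule injI)
  fix u w assume "frame_expansion e k (A u) (B u) = frame_expansion e k (A w) (B w)"
  then have "frame_expansion e' k (A u) (B u) = frame_expansion e' k (A w) (B w)"
    using frame_expansion_inj by (intro frame_expansion_cong) blast
  then show "u = w"
    by (simp only: assms)
qed

lemma frame_coordinates:
  "\<exists>A B. (\<forall>v. frame_expansion e k (A v) (B v) = v) \<and> (\<forall>i<k. linear (\<lambda>v. A v i) \<and> linear (\<lambda>v. B v i))"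
proof -
  obtain A B where AB: "\<And>v. frame_expansion e k (A v) (B v) = v"
    using frame_expansion_surj by metis
  have add: "A (u + w) i = A u i + A w i \<and> B (u + w) i = B u i + B w i" if "i < k" for u w i
    using frame_expansion_inj[OF _ that] by (metis AB frame_expansion_add)
  have smult: "A (c *s u) i = c * A u i \<and> B (c *s u) i = c * B u i" if "i < k" for c u i
    using frame_expansion_inj[OF _ that] by (metis AB frame_expansion_smult)
  have "linear (\<lambda>v. A v i) \<and> linear (\<lambda>v. B v i)" if "i < k" for i
    using add[OF that] smult[OF that]
    by (simp add: linearI scaleR_eq_vector_smult scaleR_conv_of_real)
  then show ?thesis
    using AB by blast
qed

end

lemma continuous_on_frame_expansion:
  assumes "\<And>i. i < k \<Longrightarrow> continuous_on W (e i)"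
  shows "continuous_on W (\<lambda>y. frame_expansion (\<lambda>i. e i y) k a b)"
  unfolding frame_expansion_def using assms
  by (intro continuous_intros continuous_on_compose2[OF linear_continuous_on[OF bounded_linear_vector_smult]]
      continuous_on_compose2[OF linear_continuous_on[OF bounded_linear_vconj]]) auto

text \<open>The coefficients are obtained by inverting the family of isomorphisms
  \<open>u \<mapsto> frame_expansion (e y) k (A u) (B u)\<close>, where \<open>A\<close>, \<open>B\<close> are the coordinates at \<open>x\<close>.\<close>

lemma has_derivative_frame_coefficients:
  fixes e :: "nat \<Rightarrow> 'a::euclidean_space \<Rightarrow> complex^'r" and H :: "int \<Rightarrow> 'a \<Rightarrow> (complex^'r) set"
  assumes W: "open W" "x \<in> W"
    and hs: "\<And>y. y \<in> W \<Longrightarrow> hodge_structure_wm1_within (\<lambda>q. H q y) (N y)"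
    and frame: "\<And>y. y \<in> W \<Longrightarrow> frame_of (hodge_filt (\<lambda>q. H q y) 0) k (\<lambda>i. e i y)"
    and cont: "\<And>i. i < k \<Longrightarrow> continuous_on W (e i)"
    and de: "\<And>i. i < k \<Longrightarrow> (e i has_derivative De i) (at x)"
    and dv: "(v has_derivative Dv) (at x)"
  shows "\<exists>a b Da Db. (\<forall>y\<in>W. v y = frame_expansion (\<lambda>i. e i y) k (a y) (b y)) \<and>
           (\<forall>i<k. ((\<lambda>y. a y i) has_derivative Da i) (at x) \<and> ((\<lambda>y. b y i) has_derivative Db i) (at x))"
proof -
  obtain A B where AB: "\<And>u. frame_expansion (\<lambda>i. e i x) k (A u) (B u) = u"
    and linAB: "\<And>i. i < k \<Longrightarrow> linear (\<lambda>u. A u i) \<and> linear (\<lambda>u. B u i)"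
    using frame_coordinates[OF hs[OF W(2)] frame[OF W(2)]] by blast
  define L where "L y = (\<lambda>u. frame_expansion (\<lambda>i. e i y) k (A u) (B u))" for y
  have lin: "linear (L y)" for y
    unfolding L_def by (rule linear_frame_expansion_coordinates[OF linAB])
  have inj: "inj (L y)" if "y \<in> W" for y
    unfolding L_def by (rule inj_frame_expansion_coordinates[OF hs[OF that] frame[OF that] AB])
  have cL: "continuous_on W (\<lambda>y. L y u)" for u
    unfolding L_def by (rule continuous_on_frame_expansion[OF cont])
  have dL: "((\<lambda>y. L y u) has_derivative (\<lambda>h. frame_expansion (\<lambda>i. De i h) k (A u) (B u))) (at x)" for u
    unfolding L_def by (rule has_derivative_frame_expansion[OF de])
  obtain Dg where dg: "((\<lambda>y. inv (L y) (v y)) has_derivative Dg) (at x)"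
    using has_derivative_inverse_family[where L=L, OF W _ inj cL dL dv] lin by blast
  define a where "a y = A (inv (L y) (v y))" for y
  define b where "b y = B (inv (L y) (v y))" for y
  have "v y = frame_expansion (\<lambda>i. e i y) k (a y) (b y)" if "y \<in> W" for y
  proof -
    have "L y (inv (L y) (v y)) = v y"
      using lin[of y] inj[OF that] by (simp add: linear_injective_imp_surjective surj_f_inv_f)
    then show ?thesis
      by (simp add: L_def a_def b_def)
  qed
  moreover have "((\<lambda>y. a y i) has_derivative (\<lambda>h. A (Dg h) i)) (at x)"
    and "((\<lambda>y. b y i) has_derivative (\<lambda>h. B (Dg h) i)) (at x)" if "i < k" for i
  proof -
    have blA: "bounded_linear (\<lambda>u. A u i)" and blB: "bounded_linear (\<lambda>u. B u i)"
      using linAB[OF that] by (simp_all add: linear_conv_bounded_linear)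
    show "((\<lambda>y. a y i) has_derivative (\<lambda>h. A (Dg h) i)) (at x)"
      unfolding a_def by (rule bounded_linear.has_derivative[OF blA dg])
    show "((\<lambda>y. b y i) has_derivative (\<lambda>h. B (Dg h) i)) (at x)"
      unfolding b_def by (rule bounded_linear.has_derivative[OF blB dg])
  qed
  ultimately have witness: "(\<forall>y\<in>W. v y = frame_expansion (\<lambda>i. e i y) k (a y) (b y)) \<and>
      (\<forall>i<k. ((\<lambda>y. a y i) has_derivative (\<lambda>h. A (Dg h) i)) (at x) \<and>
             ((\<lambda>y. b y i) has_derivative (\<lambda>h. B (Dg h) i)) (at x))"
    by blast
  show ?thesis
    by (rule exI[of _ a], rule exI[of _ b], rule exI[of _ "\<lambda>i h. A (Dg h) i"],
        rule exI[of _ "\<lambda>i h. B (Dg h) i"], rule witness)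
qed

lemma flat_coord_local_form:
  fixes e :: "nat \<Rightarrow> complex^'n \<Rightarrow> complex^'r" and H :: "int \<Rightarrow> complex^'n \<Rightarrow> (complex^'r) set"
  assumes W: "open W" "x \<in> W"
    and hs: "\<And>y. y \<in> W \<Longrightarrow> hodge_structure_wm1_within (\<lambda>q. H q y) (N y)"
    and frame: "\<And>y. y \<in> W \<Longrightarrow> frame_of (hodge_filt (\<lambda>q. H q y) 0) k (\<lambda>i. e i y)"
    and cont: "\<And>i. i < k \<Longrightarrow> continuous_on W (e i)"
    and de: "\<And>i. i < k \<Longrightarrow> (e i has_derivative De i) (at x)"
    and dv: "(v has_derivative Dv) (at x)"
  shows "\<exists>c Dc. (\<forall>i<k. (c i has_derivative Dc i) (at x)) \<and>
           (\<forall>y\<in>W. v y - (\<Sum>i<k. c i y *s e i y) \<in> real_vecs \<and>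
                   flat_coord H y (v y) = v y - (\<Sum>i<k. c i y *s e i y))"
proof -
  obtain a b Da Db where v: "\<And>y. y \<in> W \<Longrightarrow> v y = frame_expansion (\<lambda>i. e i y) k (a y) (b y)"
    and dab: "\<And>i. i < k \<Longrightarrow> ((\<lambda>y. a y i) has_derivative Da i) (at x) \<and> ((\<lambda>y. b y i) has_derivative Db i) (at x)"
    using has_derivative_frame_coefficients[OF W hs frame cont de dv] by metis
  define c where "c i y = a y i - cnj (b y i)" for i y
  have "(c i has_derivative (\<lambda>h. Da i h - cnj (Db i h))) (at x)" if "i < k" for i
    unfolding c_def using dab[OF that]
    by (intro has_derivative_diff bounded_linear.has_derivative[OF bounded_linear_cnj]) auto
  moreover have "v y - (\<Sum>i<k. c i y *s e i y) \<in> real_vecs \<and>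
      flat_coord H y (v y) = v y - (\<Sum>i<k. c i y *s e i y)" if y: "y \<in> W" for y
  proof -
    define h where "h = (\<Sum>i<k. b y i *s vconj (e i y))"
    have "v y - (\<Sum>i<k. c i y *s e i y) = h + vconj h"
      unfolding v[OF y] h_def c_def frame_expansion_def
      by (simp add: vector_sub_rdistrib sum_subtractf vconj_sum vconj_smult)
    then have real: "v y - (\<Sum>i<k. c i y *s e i y) \<in> real_vecs"
      by (simp add: real_vecs_iff_vconj vconj_add)
    have "v y - (v y - (\<Sum>i<k. c i y *s e i y)) \<in> hodge_filt (\<lambda>q. H q y) 0"
      using frame_sum_in_hodge_filt[OF hs[OF y] frame[OF y]] by simp
    then show ?thesis
      using flat_coord_eqI[where H=H and y=y, OF hs[OF y] real] real by blast
  qed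
  ultimately have witness: "(\<forall>i<k. (c i has_derivative (\<lambda>h. Da i h - cnj (Db i h))) (at x)) \<and>
      (\<forall>y\<in>W. v y - (\<Sum>i<k. c i y *s e i y) \<in> real_vecs \<and>
              flat_coord H y (v y) = v y - (\<Sum>i<k. c i y *s e i y))"
    by blast
  show ?thesis
    by (rule exI[of _ c], rule exI[of _ "\<lambda>i h. Da i h - cnj (Db i h)"], rule witness)
qed

lemma has_derivative_flat_coord:
  fixes e :: "nat \<Rightarrow> complex^'n \<Rightarrow> complex^'r" and H :: "int \<Rightarrow> complex^'n \<Rightarrow> (complex^'r) set"
  assumes W: "open W" "x \<in> W"
    and hs: "\<And>y. y \<in> W \<Longrightarrow> hodge_structure_wm1_within (\<lambda>q. H q y) (N y)"
    and frame: "\<And>y. y \<in> W \<Longrightarrow> frame_of (hodge_filt (\<lambda>q. H q y) 0) k (\<lambda>i. e i y)"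
    and cont: "\<And>i. i < k \<Longrightarrow> continuous_on W (e i)"
    and de: "\<And>i. i < k \<Longrightarrow> (e i has_derivative De i) (at x)"
    and dv: "(v has_derivative Dv) (at x)"
  shows "\<exists>c Dc. ((\<lambda>y. flat_coord H y (v y)) has_derivative
             (\<lambda>h. Dv h - (\<Sum>i<k. c i *s De i h + Dc i h *s e i x))) (at x) \<and>
           (\<forall>h. Dv h - (\<Sum>i<k. c i *s De i h + Dc i h *s e i x) \<in> real_vecs)"
proof -
  obtain c Dc where dc: "\<forall>i<k. (c i has_derivative Dc i) (at x)"
    and local: "\<forall>y\<in>W. v y - (\<Sum>i<k. c i y *s e i y) \<in> real_vecs \<and>
                   flat_coord H y (v y) = v y - (\<Sum>i<k. c i y *s e i y)"
    using flat_coord_local_form[OF W hs frame cont de dv] by blast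
  define D where "D h = Dv h - (\<Sum>i<k. c i x *s De i h + Dc i h *s e i x)" for h
  have dR: "((\<lambda>y. v y - (\<Sum>i<k. c i y *s e i y)) has_derivative D) (at x)"
    unfolding D_def using bounded_bilinear.FDERIV[OF bounded_bilinear_vector_smult dc[rule_format] de]
    by (intro has_derivative_diff[OF dv] has_derivative_sum) auto
  then have dflat: "((\<lambda>y. flat_coord H y (v y)) has_derivative D) (at x)"
    by (rule has_derivative_transform_within_open[OF _ W]) (simp add: local)
  have real: "\<forall>h. D h \<in> real_vecs"
    using has_derivative_real_vecs[OF W _ dR] local by blast
  show ?thesis
    by (rule exI[of _ "\<lambda>i. c i x"], rule exI[of _ Dc], rule conjI[OF dflat[unfolded D_def] real[unfolded D_def]])
qed

lemma holo_on_continuous_on: "holo_on W f \<Longrightarrow> continuous_on W f"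
  unfolding holo_on_def by (meson continuous_at_imp_continuous_on has_derivative_continuous)

text \<open>In \<open>D u + i D (i u)\<close> the complex linear terms coming from \<open>\<nabla>\<nu>\<close> and \<open>\<nabla>e\<^sub>i\<close> cancel, leaving a
  combination of the \<open>e\<^sub>i\<close>; so the conjugate of \<open>D u - i D (i u)\<close> lies in \<open>F\<^sup>0\<close>.\<close>

lemma derivative_hodge_type:
  fixes Dnu :: "complex^'n \<Rightarrow> complex^'r" and De :: "nat \<Rightarrow> complex^'n \<Rightarrow> complex^'r"
    and Dc :: "nat \<Rightarrow> complex^'n \<Rightarrow> complex"
  assumes hs: "hodge_structure_wm1_within H N" and frame: "frame_of (hodge_filt H 0) k e"
    and D: "\<And>h. D h = Dnu h - (\<Sum>i<k. c i *s De i h + Dc i h *s e i)"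
    and real: "\<And>h. D h \<in> real_vecs"
    and Dnu: "\<And>h. Dnu h \<in> hodge_filt H (-1)" "\<And>h. Dnu (\<i> *s h) = \<i> *s Dnu h"
    and De: "\<And>i h. i < k \<Longrightarrow> De i h \<in> hodge_filt H (-1)" "\<And>i h. i < k \<Longrightarrow> De i (\<i> *s h) = \<i> *s De i h"
  shows "D u - \<i> *s D (\<i> *s u) \<in> H (-1)"
proof -
  note F = csubspace_hodge_filt[OF hs]
  define G where "G h = Dnu h - (\<Sum>i<k. c i *s De i h)" for h
  define P where "P h = (\<Sum>i<k. Dc i h *s e i)" for h
  have DGP: "D h = G h - P h" for h
    by (simp add: D G_def P_def sum.distrib)
  have "(\<Sum>i<k. c i *s De i (\<i> *s u)) = (\<Sum>i<k. \<i> *s (c i *s De i u))"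
    by (rule sum.cong) (simp_all add: De(2) vector_smult_assoc mult.commute)
  then have "G (\<i> *s u) = \<i> *s G u"
    by (simp only: G_def Dnu(2) sum_cmul vector_ssub_ldistrib)
  then have "D u + \<i> *s D (\<i> *s u) = - (P u + \<i> *s P (\<i> *s u))"
    unfolding DGP by (simp add: vec_eq_iff algebra_simps)
  also have "\<dots> = - (\<Sum>i<k. (Dc i u + \<i> * Dc i (\<i> *s u)) *s e i)"
    by (simp add: P_def sum.distrib sum_cmul[symmetric] vector_sadd_rdistrib vector_smult_assoc)
  finally have sum: "D u + \<i> *s D (\<i> *s u) = - (\<Sum>i<k. (Dc i u + \<i> * Dc i (\<i> *s u)) *s e i)" .
  have conj: "vconj (D u - \<i> *s D (\<i> *s u)) = D u + \<i> *s D (\<i> *s u)"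
    using real[of u] real[of "\<i> *s u"] by (simp add: vconj_diff vconj_smult real_vecs_iff_vconj)
  have "vconj (D u - \<i> *s D (\<i> *s u)) \<in> hodge_filt H 0"
    unfolding conj sum by (rule csubspace_neg[OF F frame_sum_in_hodge_filt[OF hs frame]])
  moreover have "D h \<in> hodge_filt H (-1)" for h
  proof -
    have "e i \<in> hodge_filt H (-1)" if "i < k" for i
      using hodge_filt_antimono[OF hs _ frame_in_hodge_filt[OF hs frame that]] by simp
    then show ?thesis
      unfolding D using Dnu(1) De(1)
      by (intro csubspace_diff[OF F] csubspace_sum[OF F] csubspace_add[OF F] csubspace_smult[OF F]) auto
  qed
  then have "D u - \<i> *s D (\<i> *s u) \<in> hodge_filt H (-1)"
    by (intro csubspace_diff[OF F] csubspace_smult[OF F])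
  ultimately show ?thesis
    by (simp add: hodge_filt_m1_inter_conj[OF hs])
qed

lemma vhs_wm1_within:
  assumes "vhs_wm1 U H"
  obtains N where "\<And>y. y \<in> U \<Longrightarrow> hodge_structure_wm1_within (\<lambda>q. H q y) (N y)"
proof -
  have "\<forall>y\<in>U. \<exists>N. hodge_structure_wm1_within (\<lambda>q. H q y) N"
    using assms unfolding vhs_wm1_def hodge_structure_wm1_iff by blast
  then show ?thesis
    using that by (metis bchoice)
qed

lemma vhs_wm1_griffiths_transversality:
  assumes "vhs_wm1 U H" "open W" "W \<subseteq> U" "holo_on W s" "\<And>y. y \<in> W \<Longrightarrow> s y \<in> hodge_filt (\<lambda>q. H q y) p"
    "x \<in> W" "(s has_derivative D) (at x)"
  shows "D v \<in> hodge_filt (\<lambda>q. H q x) (p - 1)"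
proof -
  have "\<forall>p W s x D v. open W \<and> W \<subseteq> U \<and> holo_on W s \<and>
        (\<forall>y\<in>W. s y \<in> hodge_filt (\<lambda>q. H q y) p) \<and> x \<in> W \<and> (s has_derivative D) (at x)
        \<longrightarrow> D v \<in> hodge_filt (\<lambda>q. H q x) (p - 1)"
    using assms(1) unfolding vhs_wm1_def by blast
  from this[rule_format, where p=p and W=W and s=s and x=x and D=D and v=v] show ?thesis
    using assms(2-7) by blast
qed

lemma holo_on_derivatives_at:
  assumes "\<And>i. i < k \<Longrightarrow> holo_on W (e i)" "x \<in> W"
  shows "\<exists>De. \<forall>i<k. (e i has_derivative De i) (at x) \<and> (\<forall>c v. De i (c *s v) = c *s De i v)"
proof -
  have "\<forall>i\<in>{..<k}. \<exists>D. (e i has_derivative D) (at x) \<and> (\<forall>c v. D (c *s v) = c *s D v)"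
    using assms unfolding holo_on_def by blast
  then show ?thesis
    by (rule bchoice[THEN exE]) blast
qed

lemma vhs_wm1_local_frame:
  assumes "vhs_wm1 U H" "x \<in> U"
  obtains W k e where "open W" "x \<in> W" "W \<subseteq> U" "\<And>i. i < k \<Longrightarrow> holo_on W (e i)"
    "\<And>y. y \<in> W \<Longrightarrow> frame_of (hodge_filt (\<lambda>q. H q y) 0) k (\<lambda>i. e i y)"
proof -
  have "holo_subbundle U (\<lambda>y. hodge_filt (\<lambda>q. H q y) 0)"
    using assms(1) unfolding vhs_wm1_def by blast
  then have "\<exists>W k e. open W \<and> x \<in> W \<and> W \<subseteq> U \<and> (\<forall>i<k. holo_on W (e i)) \<and>
      (\<forall>y\<in>W. frame_of (hodge_filt (\<lambda>q. H q y) 0) k (\<lambda>i. e i y))"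
    using assms(2) unfolding holo_subbundle_iff_frame by (rule bspec)
  then show ?thesis
    using that by blast
qed

lemma flat_coord_normal_function_derivative:
  fixes H :: "int \<Rightarrow> complex^'n \<Rightarrow> (complex^'r) set"
  assumes vhs: "vhs_wm1 U H" and nf: "normal_function_lift U H nu" and x: "x \<in> U"
  shows "\<exists>D. ((\<lambda>y. flat_coord H y (nu y)) has_derivative D) (at x) \<and>
             (\<forall>u. D u \<in> real_vecs) \<and> (\<forall>u. D u - \<i> *s D (\<i> *s u) \<in> H (-1) x)"
proof -
  obtain N where hs: "\<And>y. y \<in> U \<Longrightarrow> hodge_structure_wm1_within (\<lambda>q. H q y) (N y)"
    using vhs_wm1_within[OF vhs] by blast
  obtain W k e where W: "open W" "x \<in> W" "W \<subseteq> U" and holo: "\<And>i. i < k \<Longrightarrow> holo_on W (e i)"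
    and frame: "\<And>y. y \<in> W \<Longrightarrow> frame_of (hodge_filt (\<lambda>q. H q y) 0) k (\<lambda>i. e i y)"
    using vhs_wm1_local_frame[OF vhs x] by blast
  have hsW: "hodge_structure_wm1_within (\<lambda>q. H q y) (N y)" if "y \<in> W" for y
    using hs W(3) that by blast
  obtain De where "\<forall>i<k. (e i has_derivative De i) (at x) \<and> (\<forall>c v. De i (c *s v) = c *s De i v)"
    using holo_on_derivatives_at[OF holo W(2)] by (rule exE)
  then have de: "\<And>i. i < k \<Longrightarrow> (e i has_derivative De i) (at x)"
    and De_clinear: "\<And>i c v. i < k \<Longrightarrow> De i (c *s v) = c *s De i v"
    by auto
  obtain Dnu where dnu: "(nu has_derivative Dnu) (at x)" and Dnu_clinear: "\<And>c v. Dnu (c *s v) = c *s Dnu v"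
    using nf x unfolding normal_function_lift_def holo_on_def by blast
  obtain c Dc where
    dflat: "((\<lambda>y. flat_coord H y (nu y)) has_derivative (\<lambda>h. Dnu h - (\<Sum>i<k. c i *s De i h + Dc i h *s e i x))) (at x)"
    and real: "\<forall>h. Dnu h - (\<Sum>i<k. c i *s De i h + Dc i h *s e i x) \<in> real_vecs"
    using has_derivative_flat_coord[OF W(1,2) hsW frame holo_on_continuous_on[OF holo] de dnu] by blast
  define D where "D h = Dnu h - (\<Sum>i<k. c i *s De i h + Dc i h *s e i x)" for h
  have D_real: "D h \<in> real_vecs" for h
    using real unfolding D_def by blast
  have Dnu_F: "Dnu h \<in> hodge_filt (\<lambda>q. H q x) (-1)" for h
    using nf x dnu unfolding normal_function_lift_def by blast
  have De_F: "De i h \<in> hodge_filt (\<lambda>q. H q x) (0 - 1)" if "i < k" for i h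
    by (rule vhs_wm1_griffiths_transversality[OF vhs W(1,3) holo[OF that]
          frame_in_hodge_filt[OF hsW frame that] W(2) de[OF that]])
  have "D u - \<i> *s D (\<i> *s u) \<in> H (-1) x" for u
    by (rule derivative_hodge_type[where H="\<lambda>q. H q x" and e="\<lambda>i. e i x" and Dnu=Dnu and De=De and Dc=Dc,
          OF hsW[OF W(2)] frame[OF W(2)] D_def D_real Dnu_F Dnu_clinear De_F[simplified] De_clinear])
  then show ?thesis
    using dflat D_real unfolding D_def[abs_def] by blast
qed

theorem theorem13p1:
  fixes U :: "(complex^'n) set"
    and H :: "int \<Rightarrow> complex^'n \<Rightarrow> (complex^'r) set"
    and Sm :: "real^'r^'r"
    and nu :: "complex^'n \<Rightarrow> complex^'r"
  assumes "vhs_wm1 U H"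
    and "\<forall>x\<in>U. weak_polarization Sm (\<lambda>p. H p x)"
    and "normal_function_lift U H nu"
  shows "\<forall>x\<in>U. \<exists>D. ((\<lambda>y. flat_coord H y (nu y)) has_derivative D) (at x) \<and>
            (\<forall>u w. pullback_omega Sm D (\<i> *s u) (\<i> *s w) = pullback_omega Sm D u w) \<and>
            (\<forall>u. 0 \<le> pullback_omega Sm D u (\<i> *s u))"
proof
  fix x assume x: "x \<in> U"
  obtain D where D: "((\<lambda>y. flat_coord H y (nu y)) has_derivative D) (at x)"
    and real: "\<And>u. D u \<in> real_vecs" and type: "\<And>u. D u - \<i> *s D (\<i> *s u) \<in> H (-1) x"
    using flat_coord_normal_function_derivative[OF assms(1,3) x] by blast
  have "hodge_structure_wm1 (\<lambda>p. H p x)"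
    using assms(1) x unfolding vhs_wm1_def by blast
  note omega = pullback_omega_hodge_type[where H="\<lambda>p. H p x" and D=D, OF assms(2)[rule_format, OF x] this real type]
  show "\<exists>D. ((\<lambda>y. flat_coord H y (nu y)) has_derivative D) (at x) \<and>
            (\<forall>u w. pullback_omega Sm D (\<i> *s u) (\<i> *s w) = pullback_omega Sm D u w) \<and>
            (\<forall>u. 0 \<le> pullback_omega Sm D u (\<i> *s u))"
    using D omega by blast
qed

end
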